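(* Let $G$ be a torsion-free group, $\mathbb{F}$ a field, $\mathsf{a}$ a unit in $\mathbb{F}[G]$ with $|supp(\mathsf{a})|=4$ and $|S_{\mathsf{a}}|=12$, and let $\mathsf{b}\in\mathbb{F}[G]$ with $\mathsf{a}\mathsf{b}=1$. Then $U(\mathsf{a},\mathsf{b})$ is the induced subgraph on the vertex set $supp(\mathsf{b})$ of the Cayley graph of $G$ with respect to $S_{\mathsf{a}}$.
   Context: $supp(\gamma)=\{x\in G:\gamma_x\ne0\}$; $S_{\mathsf{a}}=\{h^{-1}h':h\ne h',\ h,h'\in supp(\mathsf{a})\}$. The unit graph $U(\mathsf{a},\mathsf{b})$ is the multigraph with vertex set $supp(\mathsf{b})$ whose edges are the sets $\{(h,h',g,g'),(h',h,g',g)\}$ with $h,h'\in supp(\mathsf{a})$, $g,g'\in supp(\mathsf{b})$, $g\ne g'$, $hg=h'g'$, each joining $g$ and $g'$. The Cayley graph of $G$ with respect to an inverse-closed $S\not\ni 1$ is the simple graph on $G$ in which $x,y$ are adjacent iff $xy^{-1}\in S$. *)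

theory Defs
  imports "HOL-Algebra.Group"
begin

text \<open>Group ring F[G] of a group G (HOL-Algebra locale) over a field 'k (type class):
  elements are finitely supported functions 'g => 'k vanishing outside carrier G.\<close>

definition supp :: "('g \<Rightarrow> 'k::zero) \<Rightarrow> 'g set" where
  "supp \<gamma> = {x. \<gamma> x \<noteq> 0}"

definition grp_ring_elem :: "('g, 'm) monoid_scheme \<Rightarrow> ('g \<Rightarrow> 'k::field) \<Rightarrow> bool" where
  "grp_ring_elem G \<gamma> \<longleftrightarrow> finite (supp \<gamma>) \<and> supp \<gamma> \<subseteq> carrier G"

definition grp_ring_one :: "('g, 'm) monoid_scheme \<Rightarrow> 'g \<Rightarrow> 'k::field" where
  "grp_ring_one G = (\<lambda>x. if x = \<one>\<^bsub>G\<^esub> then 1 else 0)"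

definition grp_ring_mult ::
  "('g, 'm) monoid_scheme \<Rightarrow> ('g \<Rightarrow> 'k::field) \<Rightarrow> ('g \<Rightarrow> 'k) \<Rightarrow> 'g \<Rightarrow> 'k" where
  "grp_ring_mult G \<alpha> \<beta> = (\<lambda>x. \<Sum>y\<in>supp \<alpha>. \<Sum>z\<in>supp \<beta>.
      if y \<otimes>\<^bsub>G\<^esub> z = x then \<alpha> y * \<beta> z else 0)"

definition grp_ring_unit :: "('g, 'm) monoid_scheme \<Rightarrow> ('g \<Rightarrow> 'k::field) \<Rightarrow> bool" where
  "grp_ring_unit G \<alpha> \<longleftrightarrow> grp_ring_elem G \<alpha> \<and>
     (\<exists>\<beta>. grp_ring_elem G \<beta> \<and> grp_ring_mult G \<alpha> \<beta> = grp_ring_one G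
                           \<and> grp_ring_mult G \<beta> \<alpha> = grp_ring_one G)"

definition torsion_free :: "('g, 'm) monoid_scheme \<Rightarrow> bool" where
  "torsion_free G \<longleftrightarrow> (\<forall>x\<in>carrier G. \<forall>n::nat. n > 0 \<longrightarrow> x [^]\<^bsub>G\<^esub> n = \<one>\<^bsub>G\<^esub> \<longrightarrow> x = \<one>\<^bsub>G\<^esub>)"

definition S_set :: "('g, 'm) monoid_scheme \<Rightarrow> ('g \<Rightarrow> 'k::zero) \<Rightarrow> 'g set" where
  "S_set G \<alpha> = {inv\<^bsub>G\<^esub> h \<otimes>\<^bsub>G\<^esub> h' | h h'. h \<in> supp \<alpha> \<and> h' \<in> supp \<alpha> \<and> h \<noteq> h'}"

text \<open>Edges of the unit multigraph U(a,b): each edge is the two-element set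
  {(h,h',g,g'),(h',h,g',g)}, joining g and g'.\<close>
definition unit_graph_edges ::
  "('g, 'm) monoid_scheme \<Rightarrow> ('g \<Rightarrow> 'k::zero) \<Rightarrow> ('g \<Rightarrow> 'k) \<Rightarrow> ('g \<times> 'g \<times> 'g \<times> 'g) set set" where
  "unit_graph_edges G \<alpha> \<beta> =
     {{(h, h', g, g'), (h', h, g', g)} | h h' g g'.
        h \<in> supp \<alpha> \<and> h' \<in> supp \<alpha> \<and> g \<in> supp \<beta> \<and> g' \<in> supp \<beta> \<and> g \<noteq> g'
        \<and> h \<otimes>\<^bsub>G\<^esub> g = h' \<otimes>\<^bsub>G\<^esub> g'}"

definition edge_joins :: "('g \<times> 'g \<times> 'g \<times> 'g) set \<Rightarrow> 'g \<Rightarrow> 'g \<Rightarrow> bool" where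
  "edge_joins e x y \<longleftrightarrow> (\<exists>h h'. (h, h', x, y) \<in> e)"

definition unit_graph_mult ::
  "('g, 'm) monoid_scheme \<Rightarrow> ('g \<Rightarrow> 'k::zero) \<Rightarrow> ('g \<Rightarrow> 'k) \<Rightarrow> 'g \<Rightarrow> 'g \<Rightarrow> nat" where
  "unit_graph_mult G \<alpha> \<beta> x y = card {e \<in> unit_graph_edges G \<alpha> \<beta>. edge_joins e x y}"

definition cayley_adj :: "('g, 'm) monoid_scheme \<Rightarrow> 'g set \<Rightarrow> 'g \<Rightarrow> 'g \<Rightarrow> bool" where
  "cayley_adj G S x y \<longleftrightarrow> x \<otimes>\<^bsub>G\<^esub> inv\<^bsub>G\<^esub> y \<in> S"

end

theory Submission
  imports Defs
begin

(* An edge of U(a,b) between distinct vertices x and y is the same thing as an ordered pair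
  h \<noteq> h' in supp a with h x = h' y, i.e. with h^-1 h' = x y^-1. There are only 4 * 3 = 12 such
  pairs, so |S_a| = 12 says that different pairs have different quotients h^-1 h'. Hence x and y
  are joined by exactly one edge when x y^-1 \<in> S_a and by none otherwise. *)

definition left_quot :: "('g, 'm) monoid_scheme \<Rightarrow> 'g \<times> 'g \<Rightarrow> 'g" where
  "left_quot G p = inv\<^bsub>G\<^esub> fst p \<otimes>\<^bsub>G\<^esub> snd p"

lemma (in group) mult_eq_iff_left_quot_eq:
  assumes "h \<in> carrier G" "h' \<in> carrier G" "x \<in> carrier G" "y \<in> carrier G"
  shows "h \<otimes> x = h' \<otimes> y \<longleftrightarrow> inv h \<otimes> h' = x \<otimes> inv y"
proof -
  have "h \<otimes> x = h' \<otimes> y \<longleftrightarrow> x = inv h \<otimes> h' \<otimes> y"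
    using assms by (metis inv_solve_left m_assoc m_closed inv_closed)
  also have "\<dots> \<longleftrightarrow> x \<otimes> inv y = inv h \<otimes> h'"
    using assms by (metis inv_solve_right m_closed inv_closed)
  finally show ?thesis by auto
qed

lemma S_set_eq_image_left_quot: "S_set G a = left_quot G ` (supp a \<times> supp a - Id)"
  unfolding S_set_def left_quot_def by force

lemma card_offdiag:
  assumes "finite A"
  shows "card (A \<times> A - Id) = card A * (card A - 1)"
proof -
  have "Id \<inter> A \<times> A = (\<lambda>h. (h, h)) ` A" by auto
  then have "card (Id \<inter> A \<times> A) = card A" by (simp add: card_image inj_on_def)
  moreover have "A \<times> A - Id = A \<times> A - (Id \<inter> A \<times> A)" by auto
  ultimately show ?thesis
    using assms by (simp add: card_Diff_subset card_cartesian_product diff_mult_distrib2)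
qed

lemma inj_on_left_quot_if_card_S_set:
  assumes "finite (supp a)" "card (S_set G a) = card (supp a) * (card (supp a) - 1)"
  shows "inj_on (left_quot G) (supp a \<times> supp a - Id)"
  using assms by (intro eq_card_imp_inj_on) (simp_all add: S_set_eq_image_left_quot card_offdiag)

lemma card_fibre_inj_on:
  assumes "inj_on f P"
  shows "card {p \<in> P. f p = s} = (if s \<in> f ` P then 1 else 0)"
proof (cases "s \<in> f ` P")
  case True
  then obtain p where "p \<in> P" "s = f p" by blast
  with assms have "{p \<in> P. f p = s} = {p}" by (auto simp: inj_on_def)
  with True show ?thesis by simp
next
  case False
  then have "{p \<in> P. f p = s} = {}" by blast
  then show ?thesis using False by (metis card.empty)
qed

lemma unit_graph_mult_self: "unit_graph_mult G a b x x = 0"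
proof -
  have "{e \<in> unit_graph_edges G a b. edge_joins e x x} = {}"
    unfolding unit_graph_edges_def edge_joins_def by auto
  then show ?thesis unfolding unit_graph_mult_def by (metis card.empty)
qed

lemma unit_graph_mult_eq_card_left_quot_fibre:
  fixes G (structure)
  assumes "group G" "supp a \<subseteq> carrier G"
    and x: "x \<in> supp b" "x \<in> carrier G" and y: "y \<in> supp b" "y \<in> carrier G" and "x \<noteq> y"
  shows "unit_graph_mult G a b x y =
           card {p \<in> supp a \<times> supp a - Id. left_quot G p = x \<otimes> inv y}"
    (is "_ = card ?Q")
proof -
  interpret group G by fact
  define edge where "edge = (\<lambda>(h::'a, h'). {(h, h', x, y), (h', h, y, x)})"
  have rep_iff: "p \<in> ?Q \<longleftrightarrow> fst p \<in> supp a \<and> snd p \<in> supp a \<and> fst p \<otimes> x = snd p \<otimes> y"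
    for p
  proof -
    have "fst p \<otimes> x \<noteq> fst p \<otimes> y" if "fst p \<in> carrier G"
      using that x y \<open>x \<noteq> y\<close> Units_l_cancel[of "fst p" x y] Units_eq by blast
    moreover have "fst p \<otimes> x = snd p \<otimes> y \<longleftrightarrow> left_quot G p = x \<otimes> inv y"
      if "fst p \<in> carrier G" "snd p \<in> carrier G"
      using that x y mult_eq_iff_left_quot_eq[of "fst p" "snd p" x y] by (simp only: left_quot_def)
    ultimately show ?thesis
      using \<open>supp a \<subseteq> carrier G\<close> by (cases p) auto
  qed
  have "{e \<in> unit_graph_edges G a b. edge_joins e x y} = edge ` ?Q"
  proof (intro equalityI subsetI)
    fix e assume "e \<in> {e \<in> unit_graph_edges G a b. edge_joins e x y}"
    then obtain h1 h1' g g' h h' where e: "e = {(h1, h1', g, g'), (h1', h1, g', g)}"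
      and "h1 \<in> supp a" "h1' \<in> supp a" "h1 \<otimes> g = h1' \<otimes> g'" and "(h, h', x, y) \<in> e"
      unfolding unit_graph_edges_def edge_joins_def by blast
    then have "h \<in> supp a" "h' \<in> supp a" "h \<otimes> x = h' \<otimes> y" "e = edge (h, h')"
      by (auto simp: edge_def)
    then show "e \<in> edge ` ?Q"
      using rep_iff[of "(h, h')"] by auto
  next
    fix e assume "e \<in> edge ` ?Q"
    then obtain h h' where e: "e = edge (h, h')" and "(h, h') \<in> ?Q" by blast
    then have "h \<in> supp a" "h' \<in> supp a" "h \<otimes> x = h' \<otimes> y"
      using rep_iff[of "(h, h')"] by auto
    then have "e \<in> unit_graph_edges G a b"
      unfolding e edge_def unit_graph_edges_def using x y \<open>x \<noteq> y\<close> by blast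
    moreover have "edge_joins e x y"
      unfolding e edge_def edge_joins_def by blast
    ultimately show "e \<in> {e \<in> unit_graph_edges G a b. edge_joins e x y}" by blast
  qed
  moreover have "inj_on edge ?Q"
  proof (rule inj_onI)
    fix p q assume "edge p = edge q"
    moreover have "(fst p, snd p, x, y) \<in> edge p"
      by (simp add: edge_def split_beta)
    ultimately have "(fst p, snd p, x, y) \<in> edge q" by simp
    then show "p = q"
      using \<open>x \<noteq> y\<close> by (cases q) (auto simp: edge_def prod_eq_iff)
  qed
  ultimately show ?thesis
    unfolding unit_graph_mult_def by (simp add: card_image)
qed

theorem mainTheorem11:
  fixes G :: "('g, 'm) monoid_scheme" and a b :: "'g \<Rightarrow> 'k::field"
  assumes "group G"
    and "torsion_free G"
    and "grp_ring_unit G a"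
    and "card (supp a) = 4"
    and "card (S_set G a) = 12"
    and "grp_ring_elem G b"
    and "grp_ring_mult G a b = grp_ring_one G"
  shows "\<forall>x\<in>supp b. \<forall>y\<in>supp b.
           unit_graph_mult G a b x y = (if x \<noteq> y \<and> cayley_adj G (S_set G a) x y then 1 else 0)"
proof (intro ballI)
  fix x y assume xy: "x \<in> supp b" "y \<in> supp b"
  have supp_a: "finite (supp a)" "supp a \<subseteq> carrier G"
    using assms(3) by (auto simp: grp_ring_unit_def grp_ring_elem_def)
  have xy_carrier: "x \<in> carrier G" "y \<in> carrier G"
    using xy assms(6) by (auto simp: grp_ring_elem_def)
  have "inj_on (left_quot G) (supp a \<times> supp a - Id)"
    using supp_a assms(4,5) by (intro inj_on_left_quot_if_card_S_set) simp_all
  then have "unit_graph_mult G a b x y = (if cayley_adj G (S_set G a) x y then 1 else 0)"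
    if "x \<noteq> y"
    using unit_graph_mult_eq_card_left_quot_fibre[OF assms(1) supp_a(2) xy(1) xy_carrier(1)
        xy(2) xy_carrier(2) that] card_fibre_inj_on
    by (simp only: cayley_adj_def S_set_eq_image_left_quot)
  then show "unit_graph_mult G a b x y =
      (if x \<noteq> y \<and> cayley_adj G (S_set G a) x y then 1 else 0)"
    by (cases "x = y") (simp_all add: unit_graph_mult_self)
qed

end
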